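(* Let $U\in U(N)$ be such that the bistochastic matrix $B$ with $B_{ij}=|U_{ij}|^2$ belongs to the ray of some permutation matrix, i.e. $B=\alpha P+(1-\alpha)W_N$ for a permutation matrix $P$ and some $\alpha\in[0,1]$. For $i,j\in\{1,\dots,N\}$ define $|\psi_{ij}\rangle=\sum_{k=1}^N U_{ik}\,|k\rangle\otimes|k\oplus j\rangle\in\mathbb{C}^N\otimes\mathbb{C}^N$. Then $\{|\psi_{ij}\rangle\}_{i,j=1}^N$ is an orthonormal basis of $\mathbb{C}^N\otimes\mathbb{C}^N$, and all $N^2$ vectors have the same multiset of squared Schmidt coefficients, namely $\{\tfrac{1+\alpha(N-1)}{N},\tfrac{1-\alpha}{N},\dots,\tfrac{1-\alpha}{N}\}$ (with $\tfrac{1-\alpha}{N}$ repeated $N-1$ times). In particular all basis vectors have the same value of any entanglement measure that depends only on the Schmidt coefficients; for $\alpha=1$ the basis is a product basis and for $\alpha=0$ it consists of maximally entangled states.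
   Context: $\{|1\rangle,\dots,|N\rangle\}$ is the computational basis of $\mathbb{C}^N$; $\oplus$ denotes addition modulo $N$ on the labels $\{1,\dots,N\}$. $W_N$ is the $N\times N$ matrix with all entries $1/N$. A bistochastic matrix is a nonnegative real matrix with all row and column sums equal to 1. *)

theory Defs
  imports Complex_Main "HOL-Library.Multiset" "HOL-Combinatorics.Permutations"
begin

text \<open>Conventions: labels are 0,...,N-1 (shifted from 1,...,N). A vector of C^N is a function
  nat => complex (only entries below N matter); a vector of C^N (x) C^N is a coefficient array
  psi a b (coefficient of |a> (x) |b>), required to vanish outside {0..<N}^2.
  An N x N matrix is a function nat => nat => complex (entries i,j < N).\<close>

definition unitary_mat :: "nat \<Rightarrow> (nat \<Rightarrow> nat \<Rightarrow> complex) \<Rightarrow> bool" where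
  "unitary_mat N U \<longleftrightarrow>
     (\<forall>i<N. \<forall>j<N. (\<Sum>k<N. U i k * cnj (U j k)) = (if i = j then 1 else 0)) \<and>
     (\<forall>i<N. \<forall>j<N. (\<Sum>k<N. cnj (U k i) * U k j) = (if i = j then 1 else 0))"

definition vinner :: "nat \<Rightarrow> (nat \<Rightarrow> complex) \<Rightarrow> (nat \<Rightarrow> complex) \<Rightarrow> complex" where
  "vinner N x y = (\<Sum>a<N. cnj (x a) * y a)"

definition orthonormal_fam :: "nat \<Rightarrow> (nat \<Rightarrow> nat \<Rightarrow> complex) \<Rightarrow> bool" where
  "orthonormal_fam N e \<longleftrightarrow> (\<forall>k<N. \<forall>l<N. vinner N (e k) (e l) = (if k = l then 1 else 0))"

definition in_tensor :: "nat \<Rightarrow> (nat \<Rightarrow> nat \<Rightarrow> complex) \<Rightarrow> bool" where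
  "in_tensor N \<psi> \<longleftrightarrow> (\<forall>a b. (N \<le> a \<or> N \<le> b) \<longrightarrow> \<psi> a b = 0)"

definition tinner :: "nat \<Rightarrow> (nat \<Rightarrow> nat \<Rightarrow> complex) \<Rightarrow> (nat \<Rightarrow> nat \<Rightarrow> complex) \<Rightarrow> complex" where
  "tinner N \<phi> \<psi> = (\<Sum>a<N. \<Sum>b<N. cnj (\<phi> a b) * \<psi> a b)"

definition is_onb_tensor ::
  "nat \<Rightarrow> 'i set \<Rightarrow> ('i \<Rightarrow> nat \<Rightarrow> nat \<Rightarrow> complex) \<Rightarrow> bool" where
  "is_onb_tensor N I v \<longleftrightarrow>
     (\<forall>x\<in>I. in_tensor N (v x)) \<and>
     (\<forall>x\<in>I. \<forall>y\<in>I. tinner N (v x) (v y) = (if x = y then 1 else 0)) \<and>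
     (\<forall>\<psi>. in_tensor N \<psi> \<longrightarrow>
        (\<exists>c. \<forall>a b. \<psi> a b = (\<Sum>x\<in>I. c x * v x a b)))"

definition schmidt_decomp ::
  "nat \<Rightarrow> (nat \<Rightarrow> nat \<Rightarrow> complex) \<Rightarrow> (nat \<Rightarrow> real) \<Rightarrow> (nat \<Rightarrow> nat \<Rightarrow> complex)
     \<Rightarrow> (nat \<Rightarrow> nat \<Rightarrow> complex) \<Rightarrow> bool" where
  "schmidt_decomp N \<psi> s e f \<longleftrightarrow>
     (\<forall>k<N. 0 \<le> s k) \<and> orthonormal_fam N e \<and> orthonormal_fam N f \<and>
     (\<forall>a<N. \<forall>b<N. \<psi> a b = (\<Sum>k<N. complex_of_real (s k) * e k a * f k b))"

definition sq_coeffs :: "nat \<Rightarrow> (nat \<Rightarrow> real) \<Rightarrow> real multiset" where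
  "sq_coeffs N s = image_mset (\<lambda>k. (s k)\<^sup>2) (mset_set {..<N})"

text \<open>psi_ij = sum_k U_ik |k> (x) |k (+) j>, with (+) addition mod N.\<close>
definition psi_vec :: "nat \<Rightarrow> (nat \<Rightarrow> nat \<Rightarrow> complex) \<Rightarrow> nat \<times> nat \<Rightarrow> nat \<Rightarrow> nat \<Rightarrow> complex" where
  "psi_vec N U ij a b =
     (if a < N \<and> b < N \<and> b = (a + snd ij) mod N then U (fst ij) a else 0)"

end

theory Submission
  imports Defs "HOL-Number_Theory.Cong"
begin

text \<open>Each \<open>\<psi>\<^sub>i\<^sub>j\<close> is already in Schmidt form: \<open>\<psi>\<^sub>i\<^sub>j = \<Sum>\<^sub>k U\<^sub>i\<^sub>k |k\<rangle> \<otimes> |k \<oplus> j\<rangle>\<close>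
  with the orthonormal families \<open>|k\<rangle>\<close> and \<open>|k \<oplus> j\<rangle>\<close>, so its reduced density matrix on the first
  factor is \<open>diag(|U\<^sub>i\<^sub>k|\<^sup>2)\<close>. For any Schmidt decomposition \<open>\<psi> = \<Sum>\<^sub>k s\<^sub>k e\<^sub>k \<otimes> f\<^sub>k\<close> the vectors
  \<open>e\<^sub>k\<close> are eigenvectors of that matrix with eigenvalues \<open>s\<^sub>k\<^sup>2\<close>, and the \<open>s\<^sub>k\<^sup>2\<close> sum to its trace.
  Under the hypothesis the diagonal has the single entry \<open>\<mu> + \<alpha>\<close> and \<open>N - 1\<close> entries
  \<open>\<mu> = (1 - \<alpha>)/N\<close>; with two possible values the trace fixes the multiplicities.
  Orthonormality and completeness of the family come from unitarity of \<open>U\<close> row by row,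
  together with the shift \<open>j\<close> separating the supports.\<close>

lemma add_mod_right_inj:
  fixes k l j N :: nat
  assumes "k < N" "l < N" "(k + j) mod N = (l + j) mod N"
  shows "k = l"
proof -
  have "[k + j = l + j] (mod N)" using assms(3) by (simp add: cong_def)
  then have "[k = l] (mod N)" by (simp add: cong_add_rcancel_nat)
  then show ?thesis using assms(1,2) by (simp add: cong_def)
qed

lemma add_mod_diff_mod:
  fixes a b N :: nat
  assumes "a < N" "b < N"
  shows "(a + (b + N - a) mod N) mod N = b"
proof -
  have "(a + (b + N - a) mod N) mod N = (a + (b + N - a)) mod N"
    by (simp add: mod_add_right_eq)
  also have "a + (b + N - a) = b + N" using assms by simp
  finally show ?thesis using assms by simp
qed

definition reduced_density :: "nat \<Rightarrow> (nat \<Rightarrow> nat \<Rightarrow> complex) \<Rightarrow> nat \<Rightarrow> nat \<Rightarrow> complex" where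
  "reduced_density N \<psi> a a' = (\<Sum>b<N. \<psi> a b * cnj (\<psi> a' b))"

lemma orthonormal_fam_sum_inner:
  assumes "orthonormal_fam N f"
  shows "(\<Sum>b<N. (\<Sum>k<N. X k * f k b) * cnj (\<Sum>k<N. Y k * f k b)) = (\<Sum>k<N. X k * cnj (Y k))"
proof -
  have "(\<Sum>b<N. (\<Sum>k<N. X k * f k b) * cnj (\<Sum>k<N. Y k * f k b))
      = (\<Sum>k'<N. \<Sum>k<N. X k * cnj (Y k') * (\<Sum>b<N. cnj (f k' b) * f k b))"
    by (simp add: cnj_sum sum_distrib_left sum_distrib_right mult_ac)
       (subst sum.swap, rule sum.cong[OF refl], rule sum.swap)
  also have "\<dots> = (\<Sum>k'<N. \<Sum>k<N. if k = k' then X k' * cnj (Y k') else 0)"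
    using assms unfolding orthonormal_fam_def vinner_def by (intro sum.cong refl) auto
  also have "\<dots> = (\<Sum>k<N. X k * cnj (Y k))" by simp
  finally show ?thesis .
qed

lemma reduced_density_schmidt_decomp:
  assumes "schmidt_decomp N \<psi> s e f" "a < N" "a' < N"
  shows "reduced_density N \<psi> a a' = (\<Sum>k<N. of_real ((s k)\<^sup>2) * e k a * cnj (e k a'))"
proof -
  have f: "orthonormal_fam N f"
    and dec: "\<forall>a<N. \<forall>b<N. \<psi> a b = (\<Sum>k<N. of_real (s k) * e k a * f k b)"
    using assms(1) unfolding schmidt_decomp_def by auto
  have "reduced_density N \<psi> a a' = (\<Sum>b<N. (\<Sum>k<N. (of_real (s k) * e k a) * f k b)
                                     * cnj (\<Sum>k<N. (of_real (s k) * e k a') * f k b))"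
    unfolding reduced_density_def using dec assms(2,3) by (intro sum.cong refl) simp
  also have "\<dots> = (\<Sum>k<N. (of_real (s k) * e k a) * cnj (of_real (s k) * e k a'))"
    by (rule orthonormal_fam_sum_inner[OF f])
  also have "\<dots> = (\<Sum>k<N. of_real ((s k)\<^sup>2) * e k a * cnj (e k a'))"
    by (simp add: power2_eq_square mult_ac)
  finally show ?thesis .
qed

lemma schmidt_decomp_eigenvector:
  assumes sd: "schmidt_decomp N \<psi> s e f" and "l < N" "a < N"
  shows "(\<Sum>a'<N. reduced_density N \<psi> a a' * e l a') = of_real ((s l)\<^sup>2) * e l a"
proof -
  have e: "orthonormal_fam N e" using sd unfolding schmidt_decomp_def by simp
  have "(\<Sum>a'<N. reduced_density N \<psi> a a' * e l a')
      = (\<Sum>a'<N. \<Sum>k<N. of_real ((s k)\<^sup>2) * e k a * (cnj (e k a') * e l a'))"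
    using reduced_density_schmidt_decomp[OF sd \<open>a < N\<close>]
    by (simp add: sum_distrib_right mult.assoc)
  also have "\<dots> = (\<Sum>k<N. of_real ((s k)\<^sup>2) * e k a * (\<Sum>a'<N. cnj (e k a') * e l a'))"
    by (subst sum.swap) (simp add: sum_distrib_left)
  also have "\<dots> = (\<Sum>k<N. if k = l then of_real ((s l)\<^sup>2) * e l a else 0)"
    using e \<open>l < N\<close> unfolding orthonormal_fam_def vinner_def by (intro sum.cong refl) auto
  also have "\<dots> = of_real ((s l)\<^sup>2) * e l a" using \<open>l < N\<close> by simp
  finally show ?thesis .
qed

lemma schmidt_decomp_trace:
  assumes sd: "schmidt_decomp N \<psi> s e f"
  shows "(\<Sum>a<N. reduced_density N \<psi> a a) = of_real (\<Sum>k<N. (s k)\<^sup>2)"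
proof -
  have e: "orthonormal_fam N e" using sd unfolding schmidt_decomp_def by simp
  have "(\<Sum>a<N. reduced_density N \<psi> a a)
      = (\<Sum>a<N. \<Sum>k<N. of_real ((s k)\<^sup>2) * (cnj (e k a) * e k a))"
    using reduced_density_schmidt_decomp[OF sd] by (intro sum.cong refl) (simp add: mult_ac)
  also have "\<dots> = (\<Sum>k<N. of_real ((s k)\<^sup>2) * (\<Sum>a<N. cnj (e k a) * e k a))"
    by (subst sum.swap) (simp add: sum_distrib_left)
  also have "\<dots> = (\<Sum>k<N. of_real ((s k)\<^sup>2))"
    using e unfolding orthonormal_fam_def vinner_def by simp
  finally show ?thesis by simp
qed

lemma schmidt_decomp_diagonal_reduced_density:
  assumes sd: "schmidt_decomp N \<psi> s e f"
    and diag: "\<And>a a'. a < N \<Longrightarrow> a' < N \<Longrightarrow>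
                 reduced_density N \<psi> a a' = (if a = a' then of_real (d a) else 0)"
  shows "\<forall>l<N. \<exists>a<N. (s l)\<^sup>2 = d a" and "(\<Sum>l<N. (s l)\<^sup>2) = (\<Sum>a<N. d a)"
proof -
  show "\<forall>l<N. \<exists>a<N. (s l)\<^sup>2 = d a"
  proof (intro allI impI)
    fix l assume l: "l < N"
    have "vinner N (e l) (e l) = 1" using sd l unfolding schmidt_decomp_def orthonormal_fam_def by simp
    then obtain a where a: "a < N" "e l a \<noteq> 0"
      unfolding vinner_def by (metis (no_types, lifting) lessThan_iff mult_zero_right sum.neutral zero_neq_one)
    have "(\<Sum>a'<N. reduced_density N \<psi> a a' * e l a')
        = (\<Sum>a'<N. if a' = a then of_real (d a) * e l a else 0)"
      using diag a(1) by (intro sum.cong refl) auto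
    also have "\<dots> = of_real (d a) * e l a"
      using a(1) by simp
    finally have "of_real ((s l)\<^sup>2) * e l a = of_real (d a) * e l a"
      unfolding schmidt_decomp_eigenvector[OF sd l a(1)] .
    then have "(s l)\<^sup>2 = d a"
      using a(2) mult_cancel_right of_real_eq_iff by blast
    with a(1) show "\<exists>a<N. (s l)\<^sup>2 = d a" by blast
  qed
  have "of_real (\<Sum>a<N. d a) = (\<Sum>a<N. reduced_density N \<psi> a a)"
    using diag by simp
  then show "(\<Sum>l<N. (s l)\<^sup>2) = (\<Sum>a<N. d a)"
    unfolding schmidt_decomp_trace[OF sd] by (metis of_real_eq_iff)
qed

lemma image_mset_two_valued:
  fixes t :: "nat \<Rightarrow> real"
  assumes vals: "\<forall>l<N. t l = \<mu> \<or> t l = \<mu> + \<alpha>"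
    and sum: "(\<Sum>l<N. t l) = \<alpha> + real N * \<mu>" and "1 \<le> N"
  shows "image_mset t (mset_set {..<N}) = {#\<mu> + \<alpha>#} + replicate_mset (N - 1) \<mu>"
proof (cases "\<alpha> = 0")
  case True
  have "image_mset t (mset_set {..<N}) = image_mset (\<lambda>_. \<mu>) (mset_set {..<N})"
    using vals True by (intro image_mset_cong) auto
  also have "\<dots> = replicate_mset N \<mu>" by (simp add: image_mset_const_eq)
  finally have "image_mset t (mset_set {..<N}) = replicate_mset N \<mu>" .
  then show ?thesis
    using \<open>1 \<le> N\<close> True by (cases N) (auto simp: replicate_mset_Suc)
next
  case False
  define L where "L = {l \<in> {..<N}. t l = \<mu> + \<alpha>}"
  define R where "R = {..<N} - L"
  have split: "{..<N} = L \<union> R" "L \<inter> R = {}" "finite L" "finite R"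
    by (auto simp: L_def R_def)
  have tR: "\<forall>l\<in>R. t l = \<mu>" using vals by (auto simp: L_def R_def)
  have cR: "card R = N - card L" unfolding R_def
    by (subst card_Diff_subset) (auto simp: L_def)
  have cL: "card L \<le> N" using card_mono[of "{..<N}" L] by (auto simp: L_def)
  have "(\<Sum>l<N. t l) = (\<Sum>l\<in>L. t l) + (\<Sum>l\<in>R. t l)"
    using split by (simp add: sum.union_disjoint)
  also have "\<dots> = real (card L) * (\<mu> + \<alpha>) + real (card R) * \<mu>"
    using tR by (simp add: L_def)
  also have "\<dots> = real (card L) * \<alpha> + real N * \<mu>"
    using cR cL by (simp add: of_nat_diff algebra_simps)
  finally have "real (card L) * \<alpha> = \<alpha>" using sum by simp
  then have "card L = 1" using False by simp
  then obtain l0 where l0: "L = {l0}" by (rule card_1_singletonE)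
  have "t l0 = \<mu> + \<alpha>" using l0 unfolding L_def by blast
  moreover have "mset_set {..<N} = add_mset l0 (mset_set R)"
    using split l0 by (simp add: mset_set.insert)
  moreover have "image_mset t (mset_set R) = image_mset (\<lambda>_. \<mu>) (mset_set R)"
    using tR split by (intro image_mset_cong) auto
  moreover have "image_mset (\<lambda>_. \<mu>) (mset_set R) = replicate_mset (N - 1) \<mu>"
    using cR \<open>card L = 1\<close> by (simp add: image_mset_const_eq)
  ultimately show ?thesis by simp
qed

lemma tinner_psi_vec:
  assumes U: "unitary_mat N U" and "i < N" "j < N" "i' < N" "j' < N"
  shows "tinner N (psi_vec N U (i, j)) (psi_vec N U (i', j')) = (if (i, j) = (i', j') then 1 else 0)"
proof -
  have row: "(\<Sum>b<N. cnj (psi_vec N U (i, j) a b) * psi_vec N U (i', j') a b)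
     = (if j = j' then cnj (U i a) * U i' a else 0)" if "a < N" for a
  proof -
    have "(a + j) mod N = (a + j') mod N \<Longrightarrow> j = j'"
      using add_mod_right_inj[of j N j' a] assms by (simp add: add.commute)
    then have "(\<Sum>b<N. cnj (psi_vec N U (i, j) a b) * psi_vec N U (i', j') a b)
       = (\<Sum>b<N. if b = (a + j) mod N then (if j = j' then cnj (U i a) * U i' a else 0) else 0)"
      using that by (intro sum.cong refl) (auto simp: psi_vec_def)
    also have "\<dots> = (if j = j' then cnj (U i a) * U i' a else 0)"
      using that by (simp add: sum.delta')
    finally show ?thesis .
  qed
  have "tinner N (psi_vec N U (i, j)) (psi_vec N U (i', j'))
      = (\<Sum>a<N. if j = j' then cnj (U i a) * U i' a else 0)"
    unfolding tinner_def using row by simp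
  moreover have "(\<Sum>a<N. U i' a * cnj (U i a)) = (if i' = i then 1 else 0)"
    using U assms unfolding unitary_mat_def by blast
  ultimately show ?thesis by (cases "j = j'") (auto simp: mult.commute)
qed

lemma psi_vec_expansion:
  assumes U: "unitary_mat N U" and "a < N" "b < N"
  shows "\<psi> a b = (\<Sum>x\<in>{..<N} \<times> {..<N}.
                    (\<Sum>a'<N. cnj (U (fst x) a') * \<psi> a' ((a' + snd x) mod N)) * psi_vec N U x a b)"
    (is "_ = (\<Sum>x\<in>_. ?c x * _)")
proof -
  define j0 where "j0 = (b + N - a) mod N"
  have "j0 < N" using assms by (simp add: j0_def)
  have j0b: "(a + j0) mod N = b" using add_mod_diff_mod assms by (simp add: j0_def)
  have shift: "b = (a + j) mod N \<longleftrightarrow> j = j0" if "j < N" for j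
  proof
    assume "b = (a + j) mod N"
    then have "(j + a) mod N = (j0 + a) mod N" using j0b by (simp add: add.commute)
    then show "j = j0" using add_mod_right_inj that \<open>j0 < N\<close> by blast
  qed (use j0b in simp)
  have "(\<Sum>x\<in>{..<N} \<times> {..<N}. ?c x * psi_vec N U x a b)
      = (\<Sum>i<N. \<Sum>j<N. ?c (i, j) * psi_vec N U (i, j) a b)"
    by (simp add: sum.cartesian_product split_beta)
  also have "\<dots> = (\<Sum>i<N. \<Sum>j<N. if j = j0 then ?c (i, j0) * U i a else 0)"
    using assms shift by (intro sum.cong refl) (auto simp: psi_vec_def)
  also have "\<dots> = (\<Sum>i<N. \<Sum>a'<N. cnj (U i a') * U i a * \<psi> a' ((a' + j0) mod N))"
    using \<open>j0 < N\<close> by (simp add: sum_distrib_left sum_distrib_right mult_ac)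
  also have "\<dots> = (\<Sum>a'<N. (\<Sum>i<N. cnj (U i a') * U i a) * \<psi> a' ((a' + j0) mod N))"
    by (subst sum.swap) (simp add: sum_distrib_right)
  also have "\<dots> = (\<Sum>a'<N. if a' = a then \<psi> a' ((a' + j0) mod N) else 0)"
    using U assms unfolding unitary_mat_def by (intro sum.cong refl) auto
  also have "\<dots> = \<psi> a b" using assms j0b by simp
  finally show ?thesis by simp
qed

lemma is_onb_tensor_psi_vec:
  assumes U: "unitary_mat N U"
  shows "is_onb_tensor N ({..<N} \<times> {..<N}) (psi_vec N U)"
  unfolding is_onb_tensor_def
proof (intro conjI ballI allI impI)
  fix x show "in_tensor N (psi_vec N U x)" by (auto simp: in_tensor_def psi_vec_def)
next
  fix x y assume "x \<in> {..<N} \<times> {..<N}" "y \<in> {..<N} \<times> {..<N}"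
  then obtain i j i' j' where "x = (i, j)" "y = (i', j')" "i < N" "j < N" "i' < N" "j' < N"
    by blast
  then show "tinner N (psi_vec N U x) (psi_vec N U y) = (if x = y then 1 else 0)"
    using tinner_psi_vec[OF U] by simp
next
  fix \<psi> assume \<psi>: "in_tensor N \<psi>"
  show "\<exists>c. \<forall>a b. \<psi> a b = (\<Sum>x\<in>{..<N} \<times> {..<N}. c x * psi_vec N U x a b)"
  proof (intro exI allI)
    fix a b
    show "\<psi> a b = (\<Sum>x\<in>{..<N} \<times> {..<N}.
                   (\<Sum>a'<N. cnj (U (fst x) a') * \<psi> a' ((a' + snd x) mod N)) * psi_vec N U x a b)"
      using \<psi> psi_vec_expansion[OF U] by (cases "a < N \<and> b < N") (auto simp: in_tensor_def psi_vec_def)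
  qed
qed

lemma reduced_density_psi_vec:
  assumes "j < N" "a < N" "a' < N"
  shows "reduced_density N (psi_vec N U (i, j)) a a'
           = (if a = a' then of_real ((cmod (U i a))\<^sup>2) else 0)"
proof -
  have "(a + j) mod N = (a' + j) mod N \<Longrightarrow> a = a'"
    using add_mod_right_inj[of a N a' j] assms by simp
  then have "reduced_density N (psi_vec N U (i, j)) a a'
      = (\<Sum>b<N. if b = (a + j) mod N then (if a = a' then U i a * cnj (U i a) else 0) else 0)"
    unfolding reduced_density_def using assms by (intro sum.cong refl) (auto simp: psi_vec_def)
  also have "\<dots> = (if a = a' then U i a * cnj (U i a) else 0)"
    using assms by (simp add: sum.delta')
  finally show ?thesis unfolding complex_norm_square .
qed

lemma orthonormal_fam_phases:
  assumes "\<And>k. cnj (c k) * c k = 1"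
  shows "orthonormal_fam N (\<lambda>k a. if a = k then c k else 0)"
  unfolding orthonormal_fam_def vinner_def
proof (intro allI impI)
  fix k l assume "k < N" "l < N"
  have "(\<Sum>a<N. cnj (if a = k then c k else 0) * (if a = l then c l else 0))
      = (\<Sum>a<N. if a = k then (if k = l then 1 else 0) else 0)"
    using assms by (intro sum.cong refl) auto
  then show "(\<Sum>a<N. cnj (if a = k then c k else 0) * (if a = l then c l else 0))
      = (if k = l then 1 else 0)"
    using \<open>k < N\<close> by simp
qed

lemma orthonormal_fam_shift:
  "orthonormal_fam N (\<lambda>k b. if b = (k + j) mod N then 1 else 0)"
  unfolding orthonormal_fam_def vinner_def
proof (intro allI impI)
  fix k l assume "k < N" "l < N"
  then have "(k + j) mod N = (l + j) mod N \<longleftrightarrow> k = l" using add_mod_right_inj by blast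
  then have "(\<Sum>b<N. cnj (if b = (k + j) mod N then 1 else 0) * (if b = (l + j) mod N then 1 else 0))
      = (\<Sum>b<N. if b = (k + j) mod N then (if k = l then 1 else 0) else (0::complex))"
    by (intro sum.cong refl) auto
  then show "(\<Sum>b<N. cnj (if b = (k + j) mod N then 1 else 0) * (if b = (l + j) mod N then 1 else 0))
      = (if k = l then 1 else (0::complex))"
    using \<open>k < N\<close> by (simp add: sum.delta')
qed

text \<open>The phase of \<open>U\<^sub>i\<^sub>k\<close> is absorbed into the first basis vector.\<close>
lemma schmidt_decomp_psi_vec:
  defines "ph \<equiv> \<lambda>z::complex. if z = 0 then 1 else sgn z"
  assumes "j < N"
  shows "schmidt_decomp N (psi_vec N U (i, j)) (\<lambda>k. cmod (U i k))
           (\<lambda>k a. if a = k then ph (U i k) else 0) (\<lambda>k b. if b = (k + j) mod N then 1 else 0)"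
proof -
  have "cmod (ph z) = 1" for z by (simp add: ph_def norm_sgn)
  then have "cnj (ph z) * ph z = 1" for z
    by (metis complex_norm_square mult.commute of_real_1 one_power2)
  moreover have "of_real (cmod z) * ph z = z" for z
    unfolding ph_def by (simp add: sgn_div_norm scaleR_conv_of_real)
  moreover have "(\<Sum>k<N. of_real (cmod (U i k)) * (if a = k then ph (U i k) else 0)
                          * (if b = (k + j) mod N then 1 else 0))
               = of_real (cmod (U i a)) * ph (U i a) * (if b = (a + j) mod N then 1 else 0)"
    if "a < N" for a b
    using that by (simp add: if_distrib[of "\<lambda>x. _ * x * _"] cong: if_cong)
  ultimately show ?thesis
    unfolding schmidt_decomp_def by (simp add: orthonormal_fam_phases orthonormal_fam_shift psi_vec_def)
qed

lemma sq_coeffs_psi_vec: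
  assumes "1 \<le> N" "j < N" "m < N"
    and row: "\<forall>a<N. (cmod (U i a))\<^sup>2 = \<alpha> * (if m = a then 1 else 0) + \<mu>"
    and sd: "schmidt_decomp N (psi_vec N U (i, j)) s e f"
  shows "sq_coeffs N s = {#\<mu> + \<alpha>#} + replicate_mset (N - 1) \<mu>"
proof -
  define d where "d a = \<alpha> * (if m = a then 1 else 0) + \<mu>" for a
  have "reduced_density N (psi_vec N U (i, j)) a a' = (if a = a' then of_real (d a) else 0)"
    if "a < N" "a' < N" for a a'
    using reduced_density_psi_vec[OF \<open>j < N\<close> that] row that by (simp add: d_def)
  note sq = schmidt_decomp_diagonal_reduced_density[OF sd this]
  have "\<forall>l<N. (s l)\<^sup>2 = \<mu> \<or> (s l)\<^sup>2 = \<mu> + \<alpha>"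
    using sq(1) unfolding d_def by (metis add.commute add_0 mult_zero_right mult.right_neutral)
  moreover have "(\<Sum>a<N. d a) = \<alpha> + real N * \<mu>"
    using \<open>m < N\<close> by (simp add: d_def sum.distrib if_distrib[of "\<lambda>x. \<alpha> * x"] cong: if_cong)
  ultimately show ?thesis
    unfolding sq_coeffs_def using image_mset_two_valued sq(2) \<open>1 \<le> N\<close> by simp
qed

theorem mainTheorem6:
  fixes N :: nat and U :: "nat \<Rightarrow> nat \<Rightarrow> complex" and \<sigma> :: "nat \<Rightarrow> nat" and \<alpha> :: real
  assumes "1 \<le> N"
    and "unitary_mat N U"
    and "\<sigma> permutes {..<N}"
    and "0 \<le> \<alpha>" and "\<alpha> \<le> 1"
    and "\<forall>i<N. \<forall>j<N. (cmod (U i j))\<^sup>2 =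
            \<alpha> * (if \<sigma> i = j then 1 else 0) + (1 - \<alpha>) * (1 / real N)"
  shows "is_onb_tensor N ({..<N} \<times> {..<N}) (psi_vec N U)
       \<and> (\<forall>i<N. \<forall>j<N.
            (\<exists>s e f. schmidt_decomp N (psi_vec N U (i, j)) s e f) \<and>
            (\<forall>s e f. schmidt_decomp N (psi_vec N U (i, j)) s e f \<longrightarrow>
               sq_coeffs N s = {# (1 + \<alpha> * (real N - 1)) / real N #}
                               + replicate_mset (N - 1) ((1 - \<alpha>) / real N)))"
proof (intro conjI allI impI)
  show "is_onb_tensor N ({..<N} \<times> {..<N}) (psi_vec N U)"
    using is_onb_tensor_psi_vec[OF assms(2)] .
next
  fix i j assume "i < N" "j < N"
  then show "\<exists>s e f. schmidt_decomp N (psi_vec N U (i, j)) s e f"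
    using schmidt_decomp_psi_vec by blast
next
  fix i j s e f
  assume "i < N" "j < N" and sd: "schmidt_decomp N (psi_vec N U (i, j)) s e f"
  define \<mu> where "\<mu> = (1 - \<alpha>) * (1 / real N)"
  have "\<sigma> i < N" using permutes_in_image[OF assms(3)] \<open>i < N\<close> by simp
  then have "sq_coeffs N s = {#\<mu> + \<alpha>#} + replicate_mset (N - 1) \<mu>"
    using sq_coeffs_psi_vec[OF assms(1) \<open>j < N\<close> _ _ sd] assms(6) \<open>i < N\<close> by (simp add: \<mu>_def)
  moreover have "\<mu> + \<alpha> = (1 + \<alpha> * (real N - 1)) / real N" "\<mu> = (1 - \<alpha>) / real N"
    using assms(1) unfolding \<mu>_def by (auto simp: field_simps)
  ultimately show "sq_coeffs N s = {# (1 + \<alpha> * (real N - 1)) / real N #}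
                               + replicate_mset (N - 1) ((1 - \<alpha>) / real N)" by simp
qed

end
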